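(* Let $G$ be a finite simple graph without isolated vertices, with vertices $v_1,\dots,v_n$, and let $f_j=\mathrm{dp}(v_j)$ for $1\le j\le n$ (so $(f_1,\dots,f_n)$ is, up to ordering, the degree polynomial sequence of $G$). Then: (a) $\sum_{j=1}^{n} sc(f_j)$ is even; (b) for every vertex $v$ of $G$ and every term $kx^{i}$ of $\mathrm{dp}(v)$ with $k\neq 0$, there are at least $k$ distinct vertices $w_1,\dots,w_k$ of $G$, all distinct from $v$, such that $sc(\mathrm{dp}(w_1))=\dots=sc(\mathrm{dp}(w_k))=i$; (c) both $\sum_{j:\ sc(f_j)\text{ odd}} sec(f_j)$ and $\sum_{j:\ sc(f_j)\text{ even}} sec(f_j)$ are even integers.
   Context: For a vertex $v$ of a simple graph $G$, the degree polynomial $\mathrm{dp}(v)\in\mathbb{Z}[x]$ is the polynomial in which the coefficient of $x^{i}$ is the number of neighbors of $v$ that have degree $i$ in $G$ (so $\mathrm{dp}(v)=0$ if $v$ is isolated). For a polynomial $f=\sum_i a_i x^i$ with nonnegative integer coefficients, $sc(f)$ denotes the sum of all its coefficients (with $sc(0)=0$), $sec(f)$ the sum of the coefficients $a_i$ with $i$ even, and $soc(f)$ the sum of the coefficients $a_i$ with $i$ odd. The degree polynomial sequence of $G$ is the list of degree polynomials of its vertices arranged in non-increasing order with respect to a fixed total order on polynomials. *)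

theory Defs
  imports "HOL-Computational_Algebra.Polynomial"
begin

definition simple_graph :: "'a set \<Rightarrow> ('a \<Rightarrow> 'a \<Rightarrow> bool) \<Rightarrow> bool" where
  "simple_graph V E \<longleftrightarrow> finite V \<and> (\<forall>u v. E u v \<longrightarrow> u \<in> V \<and> v \<in> V)
     \<and> (\<forall>u v. E u v \<longrightarrow> E v u) \<and> (\<forall>v. \<not> E v v)"

definition neighbors :: "'a set \<Rightarrow> ('a \<Rightarrow> 'a \<Rightarrow> bool) \<Rightarrow> 'a \<Rightarrow> 'a set" where
  "neighbors V E v = {u \<in> V. E v u}"

definition gdeg :: "'a set \<Rightarrow> ('a \<Rightarrow> 'a \<Rightarrow> bool) \<Rightarrow> 'a \<Rightarrow> nat" where
  "gdeg V E v = card (neighbors V E v)"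

definition dp :: "'a set \<Rightarrow> ('a \<Rightarrow> 'a \<Rightarrow> bool) \<Rightarrow> 'a \<Rightarrow> nat poly" where
  "dp V E v = (\<Sum>u \<in> neighbors V E v. monom 1 (gdeg V E u))"

definition sc :: "nat poly \<Rightarrow> nat" where
  "sc f = (\<Sum>i\<le>degree f. coeff f i)"

definition sec :: "nat poly \<Rightarrow> nat" where
  "sec f = (\<Sum>i\<in>{i. i \<le> degree f \<and> even i}. coeff f i)"

definition soc :: "nat poly \<Rightarrow> nat" where
  "soc f = (\<Sum>i\<in>{i. i \<le> degree f \<and> odd i}. coeff f i)"

end

theory Submission
  imports Defs
begin

text \<open>
  Since all coefficients of a degree polynomial count neighbours, sc (dp v) is the
  degree of v, sec (dp v) is the number of neighbours of even degree and the
  coefficient of x^i is the number of neighbours of degree i. Part (a) is then the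
  handshake lemma and part (b) is witnessed by those neighbours. For (c), let A be the set of
  even-degree vertices. The sum over the even class is the degree sum of the subgraph induced
  by A, hence even by the handshake lemma; the sum over the odd class counts the edges between
  A and its complement, which is the degree sum over A minus that handshake sum.
\<close>

lemma card_filter_eq_sum_indicator:
  "finite A \<Longrightarrow> card {x\<in>A. P x} = (\<Sum>x\<in>A. if P x then 1 else 0 :: nat)"
  by (simp only: card_eq_sum sum.inter_filter)

lemma coeff_sum_monom_one:
  "finite S \<Longrightarrow> coeff (\<Sum>u\<in>S. monom (1::nat) (g u)) i = card {u\<in>S. g u = i}"
  unfolding coeff_sum coeff_monom by (simp add: card_filter_eq_sum_indicator eq_commute)

lemma sum_coeff_sum_monom_one:
  assumes "finite S" "finite I"
  shows "(\<Sum>i\<in>I. coeff (\<Sum>u\<in>S. monom (1::nat) (g u)) i) = card {u\<in>S. g u \<in> I}"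
proof -
  have "(\<Sum>i\<in>I. coeff (\<Sum>u\<in>S. monom (1::nat) (g u)) i) = (\<Sum>i\<in>I. card {u\<in>S. g u = i})"
    using assms(1) by (intro sum.cong refl coeff_sum_monom_one)
  also have "\<dots> = card (\<Union>i\<in>I. {u\<in>S. g u = i})"
    using assms by (intro card_UN_disjoint[symmetric]) auto
  also have "(\<Union>i\<in>I. {u\<in>S. g u = i}) = {u\<in>S. g u \<in> I}"
    by auto
  finally show ?thesis .
qed

lemma le_degree_sum_monom_one:
  assumes "finite S" "v \<in> S"
  shows "g v \<le> degree (\<Sum>u\<in>S. monom (1::nat) (g u))"
proof (rule le_degree)
  have "card {u\<in>S. g u = g v} \<noteq> 0"
    using assms by (subst card_0_eq) auto
  then show "coeff (\<Sum>u\<in>S. monom (1::nat) (g u)) (g v) \<noteq> 0"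
    by (subst coeff_sum_monom_one[OF assms(1)])
qed

lemma sc_sum_monom_one:
  assumes "finite S"
  shows "sc (\<Sum>u\<in>S. monom (1::nat) (g u)) = card S"
proof -
  let ?p = "\<Sum>u\<in>S. monom (1::nat) (g u)"
  have "sc ?p = card {u\<in>S. g u \<in> {..degree ?p}}"
    unfolding sc_def using assms by (intro sum_coeff_sum_monom_one finite_atMost)
  also have "{u\<in>S. g u \<in> {..degree ?p}} = S"
    using le_degree_sum_monom_one[OF assms] by auto
  finally show ?thesis .
qed

lemma sec_sum_monom_one:
  assumes "finite S"
  shows "sec (\<Sum>u\<in>S. monom (1::nat) (g u)) = card {u\<in>S. even (g u)}"
proof -
  let ?p = "\<Sum>u\<in>S. monom (1::nat) (g u)"
  have "sec ?p = card {u\<in>S. g u \<in> {i. i \<le> degree ?p \<and> even i}}"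
    unfolding sec_def using assms by (intro sum_coeff_sum_monom_one) auto
  also have "{u\<in>S. g u \<in> {i. i \<le> degree ?p \<and> even i}} = {u\<in>S. even (g u)}"
    using le_degree_sum_monom_one[OF assms] by auto
  finally show ?thesis .
qed

lemma finite_neighbors: "finite A \<Longrightarrow> finite (neighbors A E v)"
  by (simp add: neighbors_def)

lemma card_neighbors_Un:
  assumes "finite A" "finite B" "A \<inter> B = {}"
  shows "card (neighbors (A \<union> B) E v) = card (neighbors A E v) + card (neighbors B E v)"
proof -
  have "neighbors (A \<union> B) E v = neighbors A E v \<union> neighbors B E v"
    by (auto simp: neighbors_def)
  moreover have "neighbors A E v \<inter> neighbors B E v = {}"
    using assms(3) by (auto simp: neighbors_def)
  ultimately show ?thesis
    using assms by (simp add: finite_neighbors card_Un_disjoint)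
qed

lemma sum_card_neighbors_swap:
  assumes "finite A" "finite B" "\<And>u v. E u v \<Longrightarrow> E v u"
  shows "(\<Sum>v\<in>B. card (neighbors A E v)) = (\<Sum>u\<in>A. card (neighbors B E u))"
proof -
  have "(\<Sum>v\<in>B. card (neighbors A E v)) = (\<Sum>v\<in>B. \<Sum>u\<in>A. if E v u then 1 else 0)"
    using assms(1) by (simp add: neighbors_def card_filter_eq_sum_indicator)
  also have "\<dots> = (\<Sum>u\<in>A. \<Sum>v\<in>B. if E v u then 1 else 0)"
    by (rule sum.swap)
  also have "\<dots> = (\<Sum>u\<in>A. \<Sum>v\<in>B. if E u v then 1 else 0)"
    by (intro sum.cong refl) (metis assms(3))
  also have "\<dots> = (\<Sum>u\<in>A. card (neighbors B E u))"
    using assms(2) by (simp add: neighbors_def card_filter_eq_sum_indicator)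
  finally show ?thesis .
qed

lemma even_sum_card_neighbors:
  assumes "finite A" "\<And>u v. E u v \<Longrightarrow> E v u" "\<And>v. \<not> E v v"
  shows "even (\<Sum>v\<in>A. card (neighbors A E v))"
  using assms(1)
proof (induction A rule: finite_induct)
  case empty
  then show ?case by simp
next
  case (insert a A)
  let ?S = "\<lambda>B C. \<Sum>v\<in>B. card (neighbors C E v)"
  have "?S (insert a A) (insert a A) = ?S (insert a A) {a} + ?S (insert a A) A"
    using insert card_neighbors_Un[of "{a}" A E] by (simp add: sum.distrib)
  also have "?S (insert a A) {a} = card (neighbors (insert a A) E a)"
    using insert sum_card_neighbors_swap[of "{a}" "insert a A" E] assms(2) by simp
  also have "neighbors (insert a A) E a = neighbors A E a"
    using assms(3) by (auto simp: neighbors_def)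
  also have "?S (insert a A) A = card (neighbors A E a) + ?S A A"
    using insert by simp
  finally have "?S (insert a A) (insert a A) = 2 * card (neighbors A E a) + ?S A A"
    by simp
  with insert.IH show ?case by simp
qed

lemma even_sum_card_cross_neighbors:
  assumes "simple_graph V E" "A \<subseteq> V" "\<And>a. a \<in> A \<Longrightarrow> even (gdeg V E a)"
  shows "even (\<Sum>v\<in>V - A. card (neighbors A E v))"
proof -
  have fin: "finite V" "finite A" "finite (V - A)"
    and sym: "\<And>u v. E u v \<Longrightarrow> E v u" and irrefl: "\<And>v. \<not> E v v"
    using assms(1,2) finite_subset by (auto simp: simple_graph_def)
  have "(\<Sum>v\<in>V - A. card (neighbors A E v)) = (\<Sum>u\<in>A. card (neighbors (V - A) E u))"
    using fin(2,3) sym by (rule sum_card_neighbors_swap)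
  moreover have "(\<Sum>u\<in>A. gdeg V E u)
      = (\<Sum>u\<in>A. card (neighbors A E u)) + (\<Sum>u\<in>A. card (neighbors (V - A) E u))"
    using fin assms(2) card_neighbors_Un[of A "V - A" E]
    by (simp add: gdeg_def sum.distrib Un_absorb1)
  moreover have "even (\<Sum>u\<in>A. gdeg V E u)"
    using assms(3) by (simp add: dvd_sum)
  moreover have "even (\<Sum>u\<in>A. card (neighbors A E u))"
    using fin(2) sym irrefl by (rule even_sum_card_neighbors)
  ultimately show ?thesis
    by simp
qed

lemma coeff_dp:
  "finite V \<Longrightarrow> coeff (dp V E v) i = card {u\<in>neighbors V E v. gdeg V E u = i}"
  unfolding dp_def by (rule coeff_sum_monom_one[OF finite_neighbors])

lemma sc_dp: "finite V \<Longrightarrow> sc (dp V E v) = gdeg V E v"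
  unfolding dp_def gdeg_def by (rule sc_sum_monom_one[OF finite_neighbors])

lemma sec_dp:
  assumes "finite V"
  shows "sec (dp V E v) = card (neighbors {u\<in>V. even (gdeg V E u)} E v)"
proof -
  have "sec (dp V E v) = card {u\<in>neighbors V E v. even (gdeg V E u)}"
    unfolding dp_def by (rule sec_sum_monom_one[OF finite_neighbors[OF assms]])
  also have "{u\<in>neighbors V E v. even (gdeg V E u)} = neighbors {u\<in>V. even (gdeg V E u)} E v"
    by (auto simp: neighbors_def)
  finally show ?thesis .
qed

theorem theorem4p12:
  fixes V :: "'a set" and E :: "'a \<Rightarrow> 'a \<Rightarrow> bool"
  assumes "simple_graph V E"
    and "\<forall>v\<in>V. \<exists>u\<in>V. E v u"
  shows "even (\<Sum>v\<in>V. sc (dp V E v))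
    \<and> (\<forall>v\<in>V. \<forall>i k. coeff (dp V E v) i = k \<and> k \<noteq> 0 \<longrightarrow>
           (\<exists>W. W \<subseteq> V - {v} \<and> card W = k \<and> (\<forall>w\<in>W. sc (dp V E w) = i)))
    \<and> even (\<Sum>v\<in>{v\<in>V. odd (sc (dp V E v))}. sec (dp V E v))
    \<and> even (\<Sum>v\<in>{v\<in>V. even (sc (dp V E v))}. sec (dp V E v))"
proof -
  have fin: "finite V" and sym: "\<And>u v. E u v \<Longrightarrow> E v u" and irrefl: "\<And>v. \<not> E v v"
    using assms(1) by (auto simp: simple_graph_def)
  have handshake: "even (\<Sum>v\<in>B. card (neighbors B E v))" if "B \<subseteq> V" for B
    using even_sum_card_neighbors[of B E] finite_subset[OF that fin] sym irrefl by blast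
  define A where "A = {v\<in>V. even (gdeg V E v)}"
  have odd_class: "{v\<in>V. odd (sc (dp V E v))} = V - A"
    and even_class: "{v\<in>V. even (sc (dp V E v))} = A"
    using fin by (auto simp: A_def sc_dp)
  have "even (\<Sum>v\<in>V. sc (dp V E v))"
    using handshake[of V] fin by (simp add: sc_dp gdeg_def)
  moreover have "\<exists>W. W \<subseteq> V - {v} \<and> card W = k \<and> (\<forall>w\<in>W. sc (dp V E w) = i)"
    if "coeff (dp V E v) i = k" for v i k
    using that fin irrefl
    by (intro exI[of _ "{u\<in>neighbors V E v. gdeg V E u = i}"])
      (auto simp: coeff_dp sc_dp neighbors_def)
  moreover have "even (\<Sum>v\<in>V - A. card (neighbors A E v))"
    using assms(1) by (rule even_sum_card_cross_neighbors) (auto simp: A_def)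
  moreover have "even (\<Sum>v\<in>A. card (neighbors A E v))"
    using handshake by (simp add: A_def)
  ultimately show ?thesis
    unfolding odd_class even_class using fin by (simp add: sec_dp A_def[symmetric])
qed

end
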